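(* Let $T_C$ be a finite complete binary tree whose root has two children, and let $T_C'$ and $T_C''$ be the subtrees of $T_C$ rooted at the left and right child of the root, respectively. Then $$\mathcal{S}(T_C) = \mathcal{S}(T_C') \cup \mathcal{S}(T_C'') \cup \big(B_r(T_C') \times B_l(T_C'')\big).$$
   Context: All trees are rooted, and children are designated left or right. A complete binary tree is a rooted tree in which every non-leaf vertex has exactly two children. A full binary tree is a rooted tree in which every vertex has 0 or 2 children. An internal tree of a complete binary tree $T_C$ is a full binary tree $T$ with $\mathrm{root}(T)=\mathrm{root}(T_C)$ whose vertices and edges are a subset of those of $T_C$ (left/right children as in $T_C$); $\mathcal{T}(T_C)$ is the set of all internal trees of $T_C$. For a tree $T$, $L(T)=(L_1(T),\dots,L_{|L(T)|}(T))$ is the sequence of its leaves from left-most to right-most. The set of successive leaf transitions of $T_C$ is $$\mathcal{S}(T_C) = \bigcup_{T\in\mathcal{T}(T_C)} \{(L_n(T), L_{n+1}(T)) : 1 \le n < |L(T)|\}.$$ The left boundary $B_l(T_C)$ is the set $\{\mathrm{left}^k(\mathrm{root}(T_C)) : k\ge 0\}$ of vertices reached from the root by repeatedly taking left children (including the root); the right boundary $B_r(T_C)$ is defined symmetrically with right children. *)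

theory Defs
  imports Main
begin

text \<open>Vertices of binary trees are encoded as paths (bool lists) from a global origin:
  the left child of v is v @ [False], the right child is v @ [True].
  Edges are the parent/child pairs (butlast v, v) inside V.\<close>

definition lchild :: "bool list \<Rightarrow> bool list" where
  "lchild v = v @ [False]"

definition rchild :: "bool list \<Rightarrow> bool list" where
  "rchild v = v @ [True]"

definition rooted_tree :: "bool list \<Rightarrow> bool list set \<Rightarrow> bool" where
  "rooted_tree r V \<longleftrightarrow> r \<in> V \<and> (\<forall>v\<in>V. \<exists>p. v = r @ p)
     \<and> (\<forall>v\<in>V. v \<noteq> r \<longrightarrow> butlast v \<in> V)"

definition full_binary_tree :: "bool list \<Rightarrow> bool list set \<Rightarrow> bool" where
  "full_binary_tree r V \<longleftrightarrow> rooted_tree r V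
     \<and> (\<forall>v\<in>V. lchild v \<in> V \<longleftrightarrow> rchild v \<in> V)"

text \<open>Complete binary tree (every non-leaf vertex has exactly two children); here finite.\<close>
definition complete_binary_tree :: "bool list \<Rightarrow> bool list set \<Rightarrow> bool" where
  "complete_binary_tree r V \<longleftrightarrow> finite V \<and> full_binary_tree r V"

text \<open>Internal trees of T_C = (r, V): full binary trees with the same root whose
  vertices (and hence edges, with the same left/right designation) are among those of T_C.\<close>
definition internal_trees :: "bool list \<Rightarrow> bool list set \<Rightarrow> bool list set set" where
  "internal_trees r V = {W. W \<subseteq> V \<and> full_binary_tree r W}"

definition leaves :: "bool list set \<Rightarrow> bool list set" where
  "leaves W = {w \<in> W. lchild w \<notin> W \<and> rchild w \<notin> W}"

definition left_of :: "bool list \<Rightarrow> bool list \<Rightarrow> bool" where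
  "left_of a b \<longleftrightarrow> (\<exists>p q q'. a = p @ False # q \<and> b = p @ True # q')"

definition leaf_seq :: "bool list set \<Rightarrow> bool list list" where
  "leaf_seq W = (THE xs. set xs = leaves W \<and> sorted_wrt left_of xs)"

definition succ_trans :: "bool list \<Rightarrow> bool list set \<Rightarrow> (bool list \<times> bool list) set" where
  "succ_trans r V = (\<Union>W\<in>internal_trees r V.
      {(leaf_seq W ! n, leaf_seq W ! (n + 1)) | n. n + 1 < length (leaf_seq W)})"

definition left_boundary :: "bool list \<Rightarrow> bool list set \<Rightarrow> bool list set" where
  "left_boundary r V = {r @ replicate k False | k. r @ replicate k False \<in> V}"

definition right_boundary :: "bool list \<Rightarrow> bool list set \<Rightarrow> bool list set" where
  "right_boundary r V = {r @ replicate k True | k. r @ replicate k True \<in> V}"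

definition subtree_at :: "bool list set \<Rightarrow> bool list \<Rightarrow> bool list set" where
  "subtree_at V u = {v \<in> V. \<exists>p. v = u @ p}"

end

theory Submission
  imports Defs "HOL-Library.List_Lexorder"
begin

(* An internal tree with more than one vertex is the root joined to two internal trees W1, W2 of
   the subtrees at its children, and every such pair joins to an internal tree. The leaves of the
   join are those of W1 followed by those of W2, so its successive pairs are those of W1, those of
   W2, and the pair formed by the rightmost leaf of W1 and the leftmost leaf of W2. These extreme
   leaves are exactly the leaves on the right boundary of W1 and on the left boundary of W2: a
   leaf off the boundary has a leaf in a sibling subtree further out. Conversely every vertex of
   a full tree is a leaf of some internal tree (keep the path to it and cut off every sibling),
   which yields all of B_r(T_C') x B_l(T_C''). *)

lemma left_of_irrefl [simp]: "\<not> left_of a a"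
  unfolding left_of_def by auto

lemma left_of_split: "left_of (v @ False # x) (v @ True # y)"
  unfolding left_of_def by blast

lemma left_of_append_iff: "left_of (u @ x) (u @ y) \<longleftrightarrow> left_of x y"
proof
  show "left_of (u @ x) (u @ y) \<Longrightarrow> left_of x y"
  proof (induction u)
    case (Cons c u)
    then obtain p q q' where e: "c # u @ x = p @ False # q" "c # u @ y = p @ True # q'"
      unfolding left_of_def by auto
    then obtain p' where "p = c # p'" by (cases p) auto
    with e have "left_of (u @ x) (u @ y)" unfolding left_of_def by auto
    then show ?case using Cons.IH by simp
  qed simp
qed (metis left_of_def append.assoc)

lemma left_of_elems: "left_of x y \<Longrightarrow> False \<in> set x \<and> True \<in> set y"
  unfolding left_of_def by auto

lemma less_bool_list_iff: "(xs :: bool list) < ys \<longleftrightarrow> (\<exists>a v. ys = xs @ a # v) \<or> left_of xs ys"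
proof -
  have "{(u, v). (u :: bool) < v} = {(False, True)}" by auto
  then show ?thesis unfolding list_less_def lexord_def left_of_def by blast
qed

lemma left_of_imp_less: "left_of (xs :: bool list) ys \<Longrightarrow> xs < ys"
  by (simp add: less_bool_list_iff)

lemma left_of_asym: "left_of a b \<Longrightarrow> \<not> left_of b a"
  using left_of_imp_less less_asym by blast

definition covering_pairs :: "('a \<Rightarrow> 'a \<Rightarrow> bool) \<Rightarrow> 'a set \<Rightarrow> ('a \<times> 'a) set" where
  "covering_pairs P A = {(a, b). a \<in> A \<and> b \<in> A \<and> P a b \<and> \<not> (\<exists>c\<in>A. P a c \<and> P c b)}"

lemma covering_pairs_cong:
  "(\<And>a b. a \<in> A \<Longrightarrow> b \<in> A \<Longrightarrow> P a b \<longleftrightarrow> Q a b) \<Longrightarrow> covering_pairs P A = covering_pairs Q A"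
  unfolding covering_pairs_def by blast

lemma covering_pairs_Un:
  assumes "\<And>a b. a \<in> A \<Longrightarrow> b \<in> B \<Longrightarrow> P a b \<and> \<not> P b a"
  shows "covering_pairs P (A \<union> B) = covering_pairs P A \<union> covering_pairs P B
           \<union> {a \<in> A. \<forall>c\<in>A. \<not> P a c} \<times> {b \<in> B. \<forall>c\<in>B. \<not> P c b}"
  using assms unfolding covering_pairs_def by blast

lemma strict_sorted_consecutive_pairs:
  fixes xs :: "'a :: linorder list"
  assumes "sorted_wrt (<) xs"
  shows "{(xs ! n, xs ! (n + 1)) | n. n + 1 < length xs} = covering_pairs (<) (set xs)"
proof -
  have less_iff: "xs ! i < xs ! j \<longleftrightarrow> i < j" if "i < length xs" "j < length xs" for i j
    using assms that by (metis linorder_neq_iff not_less_iff_gr_or_eq sorted_wrt_nth_less)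
  show ?thesis
  proof (intro set_eqI iffI)
    fix z assume "z \<in> {(xs ! n, xs ! (n + 1)) | n. n + 1 < length xs}"
    then obtain n where "z = (xs ! n, xs ! (n + 1))" "n + 1 < length xs" by blast
    moreover have "\<not> (\<exists>c\<in>set xs. xs ! n < c \<and> c < xs ! (n + 1))"
      using \<open>n + 1 < length xs\<close> by (auto simp: in_set_conv_nth less_iff)
    ultimately show "z \<in> covering_pairs (<) (set xs)"
      unfolding covering_pairs_def by (simp add: less_iff)
  next
    fix z assume "z \<in> covering_pairs (<) (set xs)"
    then obtain a b where z: "z = (a, b)" "a \<in> set xs" "b \<in> set xs" "a < b"
      and nothing_between: "\<not> (\<exists>c\<in>set xs. a < c \<and> c < b)"
      unfolding covering_pairs_def by blast
    obtain i j where ij: "i < length xs" "a = xs ! i" "j < length xs" "b = xs ! j"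
      using z(2,3) by (metis in_set_conv_nth)
    have "i < j" using z(4) ij less_iff by simp
    moreover have "\<not> i + 1 < j"
      using nothing_between ij less_iff[of i "i + 1"] less_iff[of "i + 1" j] by force
    ultimately have "j = i + 1" by simp
    then show "z \<in> {(xs ! n, xs ! (n + 1)) | n. n + 1 < length xs}" using z(1) ij by blast
  qed
qed

lemma rooted_tree_root: "rooted_tree r W \<Longrightarrow> r \<in> W"
  unfolding rooted_tree_def by blast

lemma rooted_tree_extends_root: "rooted_tree r W \<Longrightarrow> v \<in> W \<Longrightarrow> \<exists>t. v = r @ t"
  unfolding rooted_tree_def by blast

lemma rooted_tree_butlast: "rooted_tree r W \<Longrightarrow> v \<in> W \<Longrightarrow> v \<noteq> r \<Longrightarrow> butlast v \<in> W"
  unfolding rooted_tree_def by blast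

lemma rooted_tree_prefix_closed:
  assumes "rooted_tree r W" "r @ v @ s \<in> W"
  shows "r @ v \<in> W"
  using assms(2)
proof (induction s rule: rev_induct)
  case (snoc x s)
  then have "butlast (r @ v @ s @ [x]) \<in> W" using rooted_tree_butlast[OF assms(1)] by simp
  then show ?case using snoc.IH by (simp add: butlast_append)
qed simp

lemma full_binary_tree_rooted: "full_binary_tree r W \<Longrightarrow> rooted_tree r W"
  unfolding full_binary_tree_def by blast

lemma full_binary_tree_children: "full_binary_tree r W \<Longrightarrow> v \<in> W \<Longrightarrow> lchild v \<in> W \<longleftrightarrow> rchild v \<in> W"
  unfolding full_binary_tree_def by blast

lemma full_binary_tree_singleton: "full_binary_tree u {u}"
  unfolding full_binary_tree_def rooted_tree_def lchild_def rchild_def by auto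

lemma leaves_singleton: "leaves {u} = {u}"
  unfolding leaves_def lchild_def rchild_def by auto

lemma subtree_at_subset: "subtree_at V u \<subseteq> V"
  unfolding subtree_at_def by blast

lemma subtree_at_mono: "W \<subseteq> V \<Longrightarrow> subtree_at W u \<subseteq> subtree_at V u"
  unfolding subtree_at_def by blast

lemma full_binary_tree_subtree_at:
  assumes "full_binary_tree r W" "c \<in> W"
  shows "full_binary_tree c (subtree_at W c)"
proof -
  have rt: "rooted_tree r W" by (rule full_binary_tree_rooted[OF assms(1)])
  obtain t0 where c: "c = r @ t0" using rooted_tree_extends_root[OF rt assms(2)] by blast
  have "butlast v \<in> subtree_at W c" if v: "v \<in> subtree_at W c" "v \<noteq> c" for v
  proof -
    obtain p where p: "v = c @ p" "v \<in> W" "p \<noteq> []" using v unfolding subtree_at_def by auto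
    then have "butlast v \<in> W" using rooted_tree_butlast[OF rt] c by auto
    moreover have "butlast v = c @ butlast p" using p by (simp add: butlast_append)
    ultimately show ?thesis unfolding subtree_at_def by blast
  qed
  then have "rooted_tree c (subtree_at W c)"
    unfolding rooted_tree_def subtree_at_def using assms(2) by auto
  then show ?thesis
    using assms(1) unfolding full_binary_tree_def subtree_at_def lchild_def rchild_def by auto
qed

lemma leaf_below:
  assumes "finite W" "v \<in> W"
  shows "\<exists>t. v @ t \<in> leaves W"
proof -
  define S where "S = {w \<in> W. \<exists>t. w = v @ t}"
  have "finite S" "v \<in> S" using assms unfolding S_def by auto
  then have m: "Max S \<in> S" using Max_in by blast
  have "Max S @ [x] \<notin> W" for x
  proof
    assume "Max S @ [x] \<in> W"
    then have "Max S @ [x] \<in> S" using m unfolding S_def by auto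
    then have "Max S @ [x] \<le> Max S" using \<open>finite S\<close> by simp
    moreover have "Max S < Max S @ [x]" by (simp add: less_bool_list_iff)
    ultimately show False by simp
  qed
  then show ?thesis using m unfolding S_def leaves_def lchild_def rchild_def by auto
qed

lemma leaves_prefix_free:
  assumes "rooted_tree r W" "a \<in> leaves W"
  shows "a @ x # s \<notin> W"
proof
  assume "a @ x # s \<in> W"
  moreover obtain t where "a = r @ t"
    using assms(2) rooted_tree_extends_root[OF assms(1)] unfolding leaves_def by blast
  ultimately have "a @ [x] \<in> W" using rooted_tree_prefix_closed[OF assms(1), of "t @ [x]" s] by simp
  then show False using assms(2) unfolding leaves_def lchild_def rchild_def by (cases x) auto
qed

lemma leaf_in_sibling_subtree:
  assumes "full_binary_tree r W" "finite W" "r @ v @ x # s \<in> W"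
  shows "\<exists>t. r @ v @ (\<not> x) # t \<in> leaves W"
proof -
  have rt: "rooted_tree r W" by (rule full_binary_tree_rooted[OF assms(1)])
  have "r @ v \<in> W" using rooted_tree_prefix_closed[OF rt, of v "x # s"] assms(3) by simp
  moreover have "r @ v @ [x] \<in> W" using rooted_tree_prefix_closed[OF rt, of "v @ [x]" s] assms(3) by simp
  ultimately have "r @ v @ [\<not> x] \<in> W"
    using full_binary_tree_children[OF assms(1), of "r @ v"] unfolding lchild_def rchild_def by (cases x) auto
  from leaf_below[OF assms(2) this] show ?thesis by simp
qed

lemma join_separated:
  assumes "rooted_tree (lchild r) W1" "rooted_tree (rchild r) W2"
  shows "v \<in> W1 \<Longrightarrow> v @ s \<notin> insert r W2" and "v \<in> W2 \<Longrightarrow> v @ s \<notin> insert r W1"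
  using rooted_tree_extends_root[OF assms(1), of v] rooted_tree_extends_root[OF assms(2), of v]
    rooted_tree_extends_root[OF assms(1), of "v @ s"] rooted_tree_extends_root[OF assms(2), of "v @ s"]
  unfolding lchild_def rchild_def by auto

lemma full_binary_tree_join:
  assumes "full_binary_tree (lchild r) W1" "full_binary_tree (rchild r) W2"
  shows "full_binary_tree r (insert r (W1 \<union> W2))"
proof -
  have rt: "rooted_tree (lchild r) W1" "rooted_tree (rchild r) W2"
    using assms by (auto intro: full_binary_tree_rooted)
  have "\<exists>p. v = r @ p" if "v \<in> insert r (W1 \<union> W2)" for v
    using that rooted_tree_extends_root[OF rt(1), of v] rooted_tree_extends_root[OF rt(2), of v]
    unfolding lchild_def rchild_def by auto
  moreover have "butlast v \<in> insert r (W1 \<union> W2)" if "v \<in> W1 \<union> W2" for v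
  proof (cases "v = lchild r \<or> v = rchild r")
    case True
    then show ?thesis unfolding lchild_def rchild_def by auto
  next
    case False
    then show ?thesis using that rooted_tree_butlast[OF rt(1)] rooted_tree_butlast[OF rt(2)] by blast
  qed
  ultimately have "rooted_tree r (insert r (W1 \<union> W2))"
    unfolding rooted_tree_def by blast
  moreover have "lchild v \<in> insert r (W1 \<union> W2) \<longleftrightarrow> rchild v \<in> insert r (W1 \<union> W2)"
    if v: "v \<in> insert r (W1 \<union> W2)" for v
  proof -
    consider "v = r" | "v \<in> W1" | "v \<in> W2" using v by blast
    then show ?thesis
    proof cases
      case 1
      then show ?thesis using rooted_tree_root[OF rt(1)] rooted_tree_root[OF rt(2)] by simp
    next
      case 2
      then show ?thesis using full_binary_tree_children[OF assms(1) 2] join_separated(1)[OF rt 2]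
        unfolding lchild_def rchild_def by auto
    next
      case 3
      then show ?thesis using full_binary_tree_children[OF assms(2) 3] join_separated(2)[OF rt 3]
        unfolding lchild_def rchild_def by auto
    qed
  qed
  ultimately show ?thesis unfolding full_binary_tree_def by blast
qed

lemma leaves_join:
  assumes "rooted_tree (lchild r) W1" "rooted_tree (rchild r) W2"
  shows "leaves (insert r (W1 \<union> W2)) = leaves W1 \<union> leaves W2"
proof (intro set_eqI)
  fix v
  consider "v = r" | "v \<in> W1" | "v \<in> W2" | "v \<notin> insert r (W1 \<union> W2)" by blast
  then show "v \<in> leaves (insert r (W1 \<union> W2)) \<longleftrightarrow> v \<in> leaves W1 \<union> leaves W2"
  proof cases
    case 1
    then show ?thesis using rooted_tree_root[OF assms(1)] join_separated[OF assms, of r "[]"]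
      unfolding leaves_def by auto
  next
    case 2
    moreover have "v \<notin> W2" using join_separated(1)[OF assms 2, of "[]"] by simp
    ultimately show ?thesis using join_separated(1)[OF assms 2]
      unfolding leaves_def lchild_def rchild_def by auto
  next
    case 3
    moreover have "v \<notin> W1" using join_separated(2)[OF assms 3, of "[]"] by simp
    ultimately show ?thesis using join_separated(2)[OF assms 3]
      unfolding leaves_def lchild_def rchild_def by auto
  qed (auto simp: leaves_def)
qed

lemma full_binary_tree_split:
  assumes "full_binary_tree r W" "lchild r \<in> W"
  shows "W = insert r (subtree_at W (lchild r) \<union> subtree_at W (rchild r))"
proof -
  have rt: "rooted_tree r W" by (rule full_binary_tree_rooted[OF assms(1)])
  have "v \<in> insert r (subtree_at W (lchild r) \<union> subtree_at W (rchild r))" if "v \<in> W" for v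
  proof -
    obtain t where "v = r @ t" using rooted_tree_extends_root[OF rt \<open>v \<in> W\<close>] by blast
    then show ?thesis using that unfolding subtree_at_def lchild_def rchild_def
      by (cases t) (auto intro: exI[of _ "tl t"])
  qed
  then show ?thesis using rt unfolding subtree_at_def rooted_tree_def by auto
qed

lemma full_binary_tree_root_only:
  assumes "full_binary_tree r W" "lchild r \<notin> W"
  shows "W = {r}"
proof -
  have rt: "rooted_tree r W" by (rule full_binary_tree_rooted[OF assms(1)])
  then have "rchild r \<notin> W" using assms full_binary_tree_children rooted_tree_root by blast
  have "v = r" if "v \<in> W" for v
  proof (rule ccontr)
    assume "v \<noteq> r"
    then obtain x t where "v = r @ x # t"
      using rooted_tree_extends_root[OF rt \<open>v \<in> W\<close>] by (metis append.right_neutral neq_Nil_conv)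
    then have "r @ [x] \<in> W" using rooted_tree_prefix_closed[OF rt, of "[x]" t] that by simp
    then show False using assms(2) \<open>rchild r \<notin> W\<close> unfolding lchild_def rchild_def by (cases x) auto
  qed
  then show ?thesis using rt unfolding rooted_tree_def by blast
qed

(* On the prefix-free set of leaves, left_of is the lexicographic order; this identifies leaf_seq
   with sorted_list_of_set and its successive pairs with the covering pairs of left_of. *)
definition leaf_transitions :: "bool list set \<Rightarrow> (bool list \<times> bool list) set" where
  "leaf_transitions W = covering_pairs left_of (leaves W)"

lemma leaf_transitions_singleton: "leaf_transitions {u} = {}"
  unfolding leaf_transitions_def covering_pairs_def leaves_singleton by auto

lemma less_iff_left_of_on_leaves:
  assumes "rooted_tree r W" "a \<in> leaves W" "b \<in> leaves W"
  shows "a < b \<longleftrightarrow> left_of a b"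
proof -
  have "\<not> (\<exists>x s. b = a @ x # s)"
    using leaves_prefix_free[OF assms(1,2)] assms(3) unfolding leaves_def by blast
  then show ?thesis by (simp add: less_bool_list_iff)
qed

lemma leaf_seq_eq_sorted_list_of_set:
  assumes "rooted_tree r W" "finite W"
  shows "leaf_seq W = sorted_list_of_set (leaves W)"
proof -
  have "finite (leaves W)" using assms(2) unfolding leaves_def by simp
  have "sorted_wrt left_of xs \<longleftrightarrow> sorted_wrt (<) xs" if "set xs = leaves W" for xs
  proof
    show "sorted_wrt left_of xs \<Longrightarrow> sorted_wrt (<) xs"
      using sorted_wrt_mono_rel[of xs left_of "(<)"] that less_iff_left_of_on_leaves[OF assms(1)] by auto
    show "sorted_wrt (<) xs \<Longrightarrow> sorted_wrt left_of xs"
      using sorted_wrt_mono_rel[of xs "(<)" left_of] that less_iff_left_of_on_leaves[OF assms(1)] by auto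
  qed
  then have "(\<lambda>xs. set xs = leaves W \<and> sorted_wrt left_of xs) = (\<lambda>xs. sorted_wrt (<) xs \<and> set xs = leaves W)"
    by auto
  then have "leaf_seq W = (THE xs. sorted_wrt (<) xs \<and> set xs = leaves W)"
    unfolding leaf_seq_def by simp
  also have "\<dots> = sorted_list_of_set (leaves W)"
    using \<open>finite (leaves W)\<close> by (simp add: the1_equality ex1_sorted_list_for_set_if_finite)
  finally show ?thesis .
qed

lemma leaf_seq_transitions:
  assumes "rooted_tree r W" "finite W"
  shows "{(leaf_seq W ! n, leaf_seq W ! (n + 1)) | n. n + 1 < length (leaf_seq W)} = leaf_transitions W"
proof -
  have "finite (leaves W)" using assms(2) unfolding leaves_def by simp
  then have "{(leaf_seq W ! n, leaf_seq W ! (n + 1)) | n. n + 1 < length (leaf_seq W)}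
      = covering_pairs (<) (leaves W)"
    using strict_sorted_consecutive_pairs[of "sorted_list_of_set (leaves W)"]
    by (simp add: leaf_seq_eq_sorted_list_of_set[OF assms])
  also have "\<dots> = leaf_transitions W"
    unfolding leaf_transitions_def
    by (rule covering_pairs_cong) (rule less_iff_left_of_on_leaves[OF assms(1)])
  finally show ?thesis .
qed

lemma succ_trans_eq_Union_leaf_transitions:
  assumes "finite V"
  shows "succ_trans r V = (\<Union>W\<in>internal_trees r V. leaf_transitions W)"
  unfolding succ_trans_def
proof (rule SUP_cong)
  fix W assume "W \<in> internal_trees r V"
  then have "rooted_tree r W" "finite W"
    using assms finite_subset full_binary_tree_rooted unfolding internal_trees_def by auto
  then show "{(leaf_seq W ! n, leaf_seq W ! (n + 1)) | n. n + 1 < length (leaf_seq W)} = leaf_transitions W"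
    by (rule leaf_seq_transitions)
qed simp

lemma rightmost_leaf_iff:
  assumes "full_binary_tree r W" "finite W" "a \<in> leaves W"
  shows "(\<forall>c\<in>leaves W. \<not> left_of a c) \<longleftrightarrow> a \<in> right_boundary r W"
proof
  have rt: "rooted_tree r W" by (rule full_binary_tree_rooted[OF assms(1)])
  have aW: "a \<in> W" using assms(3) unfolding leaves_def by simp
  then obtain p where a: "a = r @ p" using rooted_tree_extends_root[OF rt] by blast
  assume rightmost: "\<forall>c\<in>leaves W. \<not> left_of a c"
  have "False \<notin> set p"
  proof
    assume "False \<in> set p"
    then obtain v s where "p = v @ False # s" by (meson split_list)
    moreover obtain t where "r @ v @ True # t \<in> leaves W"
      using leaf_in_sibling_subtree[OF assms(1,2), of v False s] aW a \<open>p = v @ False # s\<close> by auto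
    ultimately show False using rightmost left_of_split[of "r @ v" s t] a by simp
  qed
  then have "a = r @ replicate (length p) True" using a by (metis (full_types) replicate_length_same)
  then show "a \<in> right_boundary r W" using aW unfolding right_boundary_def by auto
next
  assume "a \<in> right_boundary r W"
  then obtain k where a: "a = r @ replicate k True" unfolding right_boundary_def by blast
  show "\<forall>c\<in>leaves W. \<not> left_of a c"
  proof (intro ballI notI)
    fix c assume "c \<in> leaves W" "left_of a c"
    moreover obtain s where "c = r @ s"
      using rooted_tree_extends_root[OF full_binary_tree_rooted[OF assms(1)]] \<open>c \<in> leaves W\<close>
      unfolding leaves_def by blast
    ultimately show False using a left_of_append_iff left_of_elems by fastforce
  qed
qed

lemma leftmost_leaf_iff:
  assumes "full_binary_tree r W" "finite W" "b \<in> leaves W"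
  shows "(\<forall>c\<in>leaves W. \<not> left_of c b) \<longleftrightarrow> b \<in> left_boundary r W"
proof
  have rt: "rooted_tree r W" by (rule full_binary_tree_rooted[OF assms(1)])
  have bW: "b \<in> W" using assms(3) unfolding leaves_def by simp
  then obtain p where b: "b = r @ p" using rooted_tree_extends_root[OF rt] by blast
  assume leftmost: "\<forall>c\<in>leaves W. \<not> left_of c b"
  have "True \<notin> set p"
  proof
    assume "True \<in> set p"
    then obtain v s where "p = v @ True # s" by (meson split_list)
    moreover obtain t where "r @ v @ False # t \<in> leaves W"
      using leaf_in_sibling_subtree[OF assms(1,2), of v True s] bW b \<open>p = v @ True # s\<close> by auto
    ultimately show False using leftmost left_of_split[of "r @ v" t s] b by simp
  qed
  then have "b = r @ replicate (length p) False" using b by (metis (full_types) replicate_length_same)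
  then show "b \<in> left_boundary r W" using bW unfolding left_boundary_def by auto
next
  assume "b \<in> left_boundary r W"
  then obtain k where b: "b = r @ replicate k False" unfolding left_boundary_def by blast
  show "\<forall>c\<in>leaves W. \<not> left_of c b"
  proof (intro ballI notI)
    fix c assume "c \<in> leaves W" "left_of c b"
    moreover obtain s where "c = r @ s"
      using rooted_tree_extends_root[OF full_binary_tree_rooted[OF assms(1)]] \<open>c \<in> leaves W\<close>
      unfolding leaves_def by blast
    ultimately show False using b left_of_append_iff left_of_elems by fastforce
  qed
qed

lemma leaf_transitions_join:
  assumes "full_binary_tree (lchild r) W1" "full_binary_tree (rchild r) W2" "finite W1" "finite W2"
  shows "leaf_transitions (insert r (W1 \<union> W2)) = leaf_transitions W1 \<union> leaf_transitions W2
           \<union> (leaves W1 \<inter> right_boundary (lchild r) W1) \<times> (leaves W2 \<inter> left_boundary (rchild r) W2)"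
proof -
  have rt: "rooted_tree (lchild r) W1" "rooted_tree (rchild r) W2"
    using assms(1,2) by (auto intro: full_binary_tree_rooted)
  have "left_of a b \<and> \<not> left_of b a" if "a \<in> leaves W1" "b \<in> leaves W2" for a b
  proof -
    have "a \<in> W1" "b \<in> W2" using that unfolding leaves_def by auto
    then obtain s t where "a = r @ False # s" "b = r @ True # t"
      using rooted_tree_extends_root[OF rt(1), of a] rooted_tree_extends_root[OF rt(2), of b]
      unfolding lchild_def rchild_def by auto
    then show ?thesis using left_of_split left_of_asym by blast
  qed
  moreover have "{a \<in> leaves W1. \<forall>c\<in>leaves W1. \<not> left_of a c} = leaves W1 \<inter> right_boundary (lchild r) W1"
    using rightmost_leaf_iff[OF assms(1,3)] by blast
  moreover have "{b \<in> leaves W2. \<forall>c\<in>leaves W2. \<not> left_of c b} = leaves W2 \<inter> left_boundary (rchild r) W2"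
    using leftmost_leaf_iff[OF assms(2,4)] by blast
  ultimately show ?thesis
    unfolding leaf_transitions_def leaves_join[OF rt] by (simp add: covering_pairs_Un)
qed

lemma internal_trees_nonempty: "full_binary_tree u V \<Longrightarrow> internal_trees u V \<noteq> {}"
  using full_binary_tree_singleton rooted_tree_root[OF full_binary_tree_rooted]
  unfolding internal_trees_def by blast

lemma internal_trees_split:
  assumes "full_binary_tree r V"
  shows "internal_trees r V = insert {r}
           {insert r (W1 \<union> W2) | W1 W2. W1 \<in> internal_trees (lchild r) (subtree_at V (lchild r))
                                       \<and> W2 \<in> internal_trees (rchild r) (subtree_at V (rchild r))}"
    (is "_ = insert {r} ?joins")
proof (intro equalityI subsetI)
  fix W assume "W \<in> internal_trees r V"
  then have W: "W \<subseteq> V" "full_binary_tree r W" unfolding internal_trees_def by auto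
  show "W \<in> insert {r} ?joins"
  proof (cases "lchild r \<in> W")
    case False
    then show ?thesis using full_binary_tree_root_only[OF W(2)] by simp
  next
    case True
    have "rchild r \<in> W"
      using True full_binary_tree_children[OF W(2) rooted_tree_root[OF full_binary_tree_rooted[OF W(2)]]]
      by blast
    then have "subtree_at W (lchild r) \<in> internal_trees (lchild r) (subtree_at V (lchild r))"
      "subtree_at W (rchild r) \<in> internal_trees (rchild r) (subtree_at V (rchild r))"
      using True full_binary_tree_subtree_at[OF W(2)] subtree_at_mono[OF W(1)]
      unfolding internal_trees_def by auto
    moreover have "W = insert r (subtree_at W (lchild r) \<union> subtree_at W (rchild r))"
      by (rule full_binary_tree_split[OF W(2) True])
    ultimately show ?thesis by blast
  qed
next
  fix W assume "W \<in> insert {r} ?joins"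
  moreover have "r \<in> V" by (rule rooted_tree_root[OF full_binary_tree_rooted[OF assms]])
  ultimately show "W \<in> internal_trees r V"
    using full_binary_tree_singleton full_binary_tree_join subtree_at_subset
    unfolding internal_trees_def by blast
qed

lemma vertex_is_leaf_of_internal_tree:
  "full_binary_tree u V \<Longrightarrow> u @ p \<in> V \<Longrightarrow> \<exists>W\<in>internal_trees u V. u @ p \<in> leaves W"
proof (induction p arbitrary: u V)
  case Nil
  then show ?case
    using full_binary_tree_singleton leaves_singleton unfolding internal_trees_def by auto
next
  case (Cons x p)
  have rt: "rooted_tree u V" by (rule full_binary_tree_rooted[OF Cons.prems(1)])
  have "u @ [x] \<in> V" using rooted_tree_prefix_closed[OF rt, of "[x]" p] Cons.prems(2) by simp
  then have children: "lchild u \<in> V" "rchild u \<in> V"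
    using full_binary_tree_children[OF Cons.prems(1) rooted_tree_root[OF rt]]
    unfolding lchild_def rchild_def by (cases x; auto)+
  have "(u @ [x]) @ p \<in> subtree_at V (u @ [x])" using Cons.prems(2) unfolding subtree_at_def by auto
  then obtain W' where W': "W' \<subseteq> subtree_at V (u @ [x])" "full_binary_tree (u @ [x]) W'"
      "u @ x # p \<in> leaves W'"
    using Cons.IH[OF full_binary_tree_subtree_at[OF Cons.prems(1) \<open>u @ [x] \<in> V\<close>]]
    unfolding internal_trees_def by auto
  have "W' \<subseteq> V" using W'(1) subtree_at_subset by blast
  show ?case
  proof (cases x)
    case False
    let ?W = "insert u (W' \<union> {rchild u})"
    have "full_binary_tree (lchild u) W'" using W'(2) False unfolding lchild_def by simp
    then have "full_binary_tree u ?W" "leaves ?W = leaves W' \<union> {rchild u}"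
      using full_binary_tree_join[OF _ full_binary_tree_singleton]
        leaves_join[OF full_binary_tree_rooted full_binary_tree_rooted[OF full_binary_tree_singleton]]
      by (auto simp: leaves_singleton)
    moreover have "?W \<subseteq> V" using rooted_tree_root[OF rt] children \<open>W' \<subseteq> V\<close> by auto
    ultimately show ?thesis using W'(3) unfolding internal_trees_def by blast
  next
    case True
    let ?W = "insert u ({lchild u} \<union> W')"
    have "full_binary_tree (rchild u) W'" using W'(2) True unfolding rchild_def by simp
    then have "full_binary_tree u ?W" "leaves ?W = {lchild u} \<union> leaves W'"
      using full_binary_tree_join[OF full_binary_tree_singleton]
        leaves_join[OF full_binary_tree_rooted[OF full_binary_tree_singleton] full_binary_tree_rooted]
      by (auto simp: leaves_singleton)
    moreover have "?W \<subseteq> V" using rooted_tree_root[OF rt] children \<open>W' \<subseteq> V\<close> by auto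
    ultimately show ?thesis using W'(3) unfolding internal_trees_def by blast
  qed
qed

lemma right_boundary_eq_Union_internal_trees:
  assumes "full_binary_tree u V"
  shows "right_boundary u V = (\<Union>W\<in>internal_trees u V. leaves W \<inter> right_boundary u W)"
proof (intro equalityI subsetI)
  fix a assume "a \<in> right_boundary u V"
  then obtain k where a: "a = u @ replicate k True" "a \<in> V" unfolding right_boundary_def by blast
  then obtain W where "W \<in> internal_trees u V" "a \<in> leaves W"
    using vertex_is_leaf_of_internal_tree[OF assms] by blast
  then show "a \<in> (\<Union>W\<in>internal_trees u V. leaves W \<inter> right_boundary u W)"
    using a(1) unfolding right_boundary_def leaves_def by blast
qed (auto simp: internal_trees_def right_boundary_def)

lemma left_boundary_eq_Union_internal_trees:
  assumes "full_binary_tree u V"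
  shows "left_boundary u V = (\<Union>W\<in>internal_trees u V. leaves W \<inter> left_boundary u W)"
proof (intro equalityI subsetI)
  fix b assume "b \<in> left_boundary u V"
  then obtain k where b: "b = u @ replicate k False" "b \<in> V" unfolding left_boundary_def by blast
  then obtain W where "W \<in> internal_trees u V" "b \<in> leaves W"
    using vertex_is_leaf_of_internal_tree[OF assms] by blast
  then show "b \<in> (\<Union>W\<in>internal_trees u V. leaves W \<inter> left_boundary u W)"
    using b(1) unfolding left_boundary_def leaves_def by blast
qed (auto simp: internal_trees_def left_boundary_def)

lemma succ_trans_split_at_root:
  assumes "complete_binary_tree r V"
  shows "succ_trans r V =
    (\<Union>W1\<in>internal_trees (lchild r) (subtree_at V (lchild r)).
     \<Union>W2\<in>internal_trees (rchild r) (subtree_at V (rchild r)).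
       leaf_transitions W1 \<union> leaf_transitions W2
       \<union> (leaves W1 \<inter> right_boundary (lchild r) W1) \<times> (leaves W2 \<inter> left_boundary (rchild r) W2))"
proof -
  have fin: "finite V" and full: "full_binary_tree r V"
    using assms unfolding complete_binary_tree_def by auto
  have join: "leaf_transitions (insert r (W1 \<union> W2)) = leaf_transitions W1 \<union> leaf_transitions W2
      \<union> (leaves W1 \<inter> right_boundary (lchild r) W1) \<times> (leaves W2 \<inter> left_boundary (rchild r) W2)"
    if "W1 \<in> internal_trees (lchild r) (subtree_at V (lchild r))"
      "W2 \<in> internal_trees (rchild r) (subtree_at V (rchild r))" for W1 W2
  proof -
    have "W1 \<subseteq> V" "W2 \<subseteq> V" "full_binary_tree (lchild r) W1" "full_binary_tree (rchild r) W2"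
      using that subtree_at_subset unfolding internal_trees_def by blast+
    then show ?thesis using leaf_transitions_join finite_subset fin by blast
  qed
  have "succ_trans r V = (\<Union>W1\<in>internal_trees (lchild r) (subtree_at V (lchild r)).
      \<Union>W2\<in>internal_trees (rchild r) (subtree_at V (rchild r)). leaf_transitions (insert r (W1 \<union> W2)))"
    unfolding succ_trans_eq_Union_leaf_transitions[OF fin] internal_trees_split[OF full]
    by (auto simp: leaf_transitions_singleton)
  then show ?thesis by (simp add: join)
qed

lemma UN_UN_Un_Times:
  assumes "A \<noteq> {}" "B \<noteq> {}"
  shows "(\<Union>x\<in>A. \<Union>y\<in>B. f x \<union> g y \<union> h x \<times> k y)
         = (\<Union>x\<in>A. f x) \<union> (\<Union>y\<in>B. g y) \<union> (\<Union>x\<in>A. h x) \<times> (\<Union>y\<in>B. k y)"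
  using assms by blast

theorem mainTheorem5:
  fixes r :: "bool list" and V :: "bool list set"
  assumes "complete_binary_tree r V"
    and "lchild r \<in> V" and "rchild r \<in> V"
  shows "succ_trans r V =
           succ_trans (lchild r) (subtree_at V (lchild r))
         \<union> succ_trans (rchild r) (subtree_at V (rchild r))
         \<union> (right_boundary (lchild r) (subtree_at V (lchild r))
              \<times> left_boundary (rchild r) (subtree_at V (rchild r)))"
proof -
  let ?VL = "subtree_at V (lchild r)" and ?VR = "subtree_at V (rchild r)"
  have fin: "finite ?VL" "finite ?VR" and full: "full_binary_tree r V"
    using assms(1) finite_subset[OF subtree_at_subset] unfolding complete_binary_tree_def by auto
  have full_L: "full_binary_tree (lchild r) ?VL" and full_R: "full_binary_tree (rchild r) ?VR"
    using full_binary_tree_subtree_at[OF full] assms(2,3) by auto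
  show ?thesis
    unfolding succ_trans_split_at_root[OF assms(1)]
    using internal_trees_nonempty[OF full_L] internal_trees_nonempty[OF full_R]
    by (simp add: UN_UN_Un_Times succ_trans_eq_Union_leaf_transitions fin
        right_boundary_eq_Union_internal_trees[OF full_L] left_boundary_eq_Union_internal_trees[OF full_R])
qed

end
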